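(* Let $D$ be a bipartite digraph on $n$ vertices and let $S_1,S_2$ be sidigraphs with underlying digraph $D$ such that $S_1\in\Delta^1_n$ and $S_2\in\Delta^2_n$. Then $\phi_{S_1}(\iota z)=\epsilon\,\phi_{S_2}(z)$ where $\epsilon=\iota$ if $n\equiv1\pmod 4$, $\epsilon=-\iota$ if $n\equiv 3\pmod 4$, $\epsilon=1$ if $n\equiv 0\pmod 4$, and $\epsilon=-1$ if $n\equiv 2\pmod 4$. Consequently $\mathrm{spec}(S_1)=\iota\,\mathrm{spec}(S_2)$, and if $z_{i1},\dots,z_{in}$ are the eigenvalues of $S_i$ ($i=1,2$), then $E(S_1)=\sum_{j=1}^n|\Im z_{2j}|$ and $E(S_2)=\sum_{j=1}^n|\Im z_{1j}|$.
   Context: A sidigraph is a digraph (no loops, at most one arc from $u$ to $v$) with a sign $\sigma(a)\in\{-1,1\}$ on each arc; its adjacency matrix $A(S)$ has entry $\sigma(v_i,v_j)$ if there is an arc from $v_i$ to $v_j$ and $0$ otherwise, $\phi_S(z)=\det(zI-A(S))$, and $\mathrm{spec}(S)$ is the multiset of its eigenvalues. The energy is $E(S)=\sum_j|\Re z_j|$ over the eigenvalues $z_j$; $\Im$ denotes imaginary part and $\iota=\sqrt{-1}$. The sign of a directed cycle is the product of its arc signs. $\Delta^1_n$: sidigraphs on $n$ vertices with bipartite underlying digraph in which every directed cycle of length $\equiv0\pmod4$ is negative and every directed cycle of length $\equiv2\pmod 4$ is positive. $\Delta^2_n$: sidigraphs on $n$ vertices with bipartite underlying digraph in which every directed cycle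 is negative. *)

theory Defs
  imports "Jordan_Normal_Form.Char_Poly" "HOL-Library.Multiset"
begin

text \<open>Vertices are 0..n-1. A digraph is an arc set D (no loops, at most one arc
  u to v automatically since D is a set). A sidigraph with underlying digraph D
  is given by a sign function sigma with values in {-1,1} on the arcs of D.\<close>

definition digraph :: "nat \<Rightarrow> (nat \<times> nat) set \<Rightarrow> bool" where
  "digraph n D \<longleftrightarrow> D \<subseteq> {0..<n} \<times> {0..<n} \<and> (\<forall>v. (v, v) \<notin> D)"

definition bipartite_digraph :: "nat \<Rightarrow> (nat \<times> nat) set \<Rightarrow> bool" where
  "bipartite_digraph n D \<longleftrightarrow> digraph n D \<and>
     (\<exists>X. X \<subseteq> {0..<n} \<and> (\<forall>(u, v) \<in> D. u \<in> X \<longleftrightarrow> v \<notin> X))"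

definition signing :: "(nat \<times> nat) set \<Rightarrow> (nat \<times> nat \<Rightarrow> int) \<Rightarrow> bool" where
  "signing D \<sigma> \<longleftrightarrow> (\<forall>a \<in> D. \<sigma> a \<in> {-1, 1})"

definition dcycle :: "(nat \<times> nat) set \<Rightarrow> nat list \<Rightarrow> bool" where
  "dcycle D vs \<longleftrightarrow> vs \<noteq> [] \<and> distinct vs \<and>
     (\<forall>i < length vs. (vs ! i, vs ! ((i + 1) mod length vs)) \<in> D)"

definition cycle_sign :: "(nat \<times> nat \<Rightarrow> int) \<Rightarrow> nat list \<Rightarrow> int" where
  "cycle_sign \<sigma> vs = (\<Prod>i < length vs. \<sigma> (vs ! i, vs ! ((i + 1) mod length vs)))"

definition Delta1 :: "nat \<Rightarrow> (nat \<times> nat) set \<Rightarrow> (nat \<times> nat \<Rightarrow> int) \<Rightarrow> bool" where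
  "Delta1 n D \<sigma> \<longleftrightarrow> bipartite_digraph n D \<and> signing D \<sigma> \<and>
     (\<forall>vs. dcycle D vs \<longrightarrow>
        (length vs mod 4 = 0 \<longrightarrow> cycle_sign \<sigma> vs = -1) \<and>
        (length vs mod 4 = 2 \<longrightarrow> cycle_sign \<sigma> vs = 1))"

definition Delta2 :: "nat \<Rightarrow> (nat \<times> nat) set \<Rightarrow> (nat \<times> nat \<Rightarrow> int) \<Rightarrow> bool" where
  "Delta2 n D \<sigma> \<longleftrightarrow> bipartite_digraph n D \<and> signing D \<sigma> \<and>
     (\<forall>vs. dcycle D vs \<longrightarrow> cycle_sign \<sigma> vs = -1)"

definition adj :: "nat \<Rightarrow> (nat \<times> nat) set \<Rightarrow> (nat \<times> nat \<Rightarrow> int) \<Rightarrow> complex mat" where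
  "adj n D \<sigma> = mat n n (\<lambda>(i, j). if (i, j) \<in> D then of_int (\<sigma> (i, j)) else 0)"

definition phi :: "nat \<Rightarrow> (nat \<times> nat) set \<Rightarrow> (nat \<times> nat \<Rightarrow> int) \<Rightarrow> complex \<Rightarrow> complex" where
  "phi n D \<sigma> z = det (z \<cdot>\<^sub>m 1\<^sub>m n - adj n D \<sigma>)"

definition spec :: "nat \<Rightarrow> (nat \<times> nat) set \<Rightarrow> (nat \<times> nat \<Rightarrow> int) \<Rightarrow> complex multiset" where
  "spec n D \<sigma> = proots (char_poly (adj n D \<sigma>))"

definition energy :: "nat \<Rightarrow> (nat \<times> nat) set \<Rightarrow> (nat \<times> nat \<Rightarrow> int) \<Rightarrow> real" where
  "energy n D \<sigma> = sum_mset (image_mset (\<lambda>z. \<bar>Re z\<bar>) (spec n D \<sigma>))"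

end

theory Submission
  imports Defs "HOL-Combinatorics.Orbits"
begin

text \<open>Expand both characteristic polynomials by the Leibniz formula. For a permutation \<open>p\<close>,
  the product of the entries of \<open>\<i>z I - A(S1)\<close> along \<open>p\<close> splits over the orbits of \<open>p\<close>.
  A fixed point contributes \<open>\<i>z\<close> against \<open>z\<close>. An orbit of length \<open>k \<ge> 2\<close> contributes zero
  unless it is a directed cycle of \<open>D\<close>, and otherwise \<open>(-1)^k\<close> times the cycle sign. Since \<open>D\<close>
  is bipartite, \<open>k\<close> is even, and then the defining conditions of \<open>\<Delta>1\<close> and \<open>\<Delta>2\<close> say
  exactly that the sign of the cycle in \<open>S1\<close> is \<open>\<i>^k\<close> times its sign in \<open>S2\<close>. Hence every
  Leibniz term of \<open>\<phi>_S1(\<i>z)\<close> is \<open>\<i>^n\<close> times the corresponding term of \<open>\<phi>_S2(z)\<close>. The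
  spectra are then compared through linear factorizations, and the energies through
  \<open>Re (\<i>z) = - Im z\<close> and \<open>Im (\<i>z) = Re z\<close>.\<close>

lemma prod_eq_by_orbits:
  fixes f g :: "'a \<Rightarrow> 'b::comm_monoid_mult"
  assumes "p permutes S" "finite S"
    and "\<And>x. x \<in> S \<Longrightarrow> prod f (orbit p x) = prod g (orbit p x)"
  shows "prod f S = prod g S"
proof -
  obtain C where cyclic: "\<forall>c\<in>C. cyclic_on p c" and S: "\<Union>C = S"
    and disj: "\<forall>c1\<in>C. \<forall>c2\<in>C. c1 \<noteq> c2 \<longrightarrow> c1 \<inter> c2 = {}"
    using permutes_decompose[OF assms(1,2)] by (elim exE conjE)
  have fin: "\<forall>c\<in>C. finite c"
  proof
    fix c assume "c \<in> C"
    then have "c \<subseteq> S" using S by blast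
    then show "finite c" using assms(2) by (rule finite_subset)
  qed
  have "prod f c = prod g c" if "c \<in> C" for c
  proof -
    have "cyclic_on p c" using cyclic that by (rule bspec)
    then obtain x where "x \<in> c" "c = orbit p x"
      unfolding cyclic_on_def by (elim bexE)
    moreover have "x \<in> S" using \<open>x \<in> c\<close> that S by blast
    ultimately show ?thesis using assms(3) by simp
  qed
  then have "(\<Prod>c\<in>C. prod f c) = (\<Prod>c\<in>C. prod g c)" by (rule prod.cong[OF refl])
  then show ?thesis
    using prod.Union_disjoint[OF fin disj, of f] prod.Union_disjoint[OF fin disj, of g]
    unfolding S by (simp add: comp_def)
qed

lemma permutation_orbit_list:
  assumes "permutation p"
  obtains vs where "distinct vs" "set vs = orbit p x"
    "\<And>i. i < length vs \<Longrightarrow> vs ! ((i + 1) mod length vs) = p (vs ! i)"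
proof -
  have x: "x \<in> orbit p x" using permutation_self_in_orbit[OF assms] .
  define k where "k = funpow_dist1 p x x"
  define vs where "vs = map (\<lambda>m. (p ^^ m) x) [0..<k]"
  have period: "(p ^^ k) x = x" unfolding k_def using funpow_dist1_prop[OF x] .
  have "inj_on (\<lambda>m. (p ^^ m) x) {0..<k}"
    unfolding k_def by (rule inj_on_funpow_dist1[OF x])
  then have "distinct vs" unfolding vs_def by (simp add: distinct_map)
  moreover have "orbit p x = (\<lambda>m. (p ^^ m) x) ` {0..<k}"
    unfolding k_def by (rule orbit_conv_funpow_dist1[OF x])
  then have "set vs = orbit p x" unfolding vs_def by simp
  moreover have "vs ! ((i + 1) mod length vs) = p (vs ! i)" if "i < length vs" for i
  proof -
    have "vs ! ((i + 1) mod length vs) = (p ^^ ((i + 1) mod k)) x"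
      using \<open>i < length vs\<close> by (simp add: vs_def)
    also have "\<dots> = (p ^^ (i + 1)) x" by (rule funpow_mod_eq[OF period])
    finally show ?thesis using \<open>i < length vs\<close> by (simp add: vs_def)
  qed
  ultimately show thesis by (rule that)
qed

lemma cycle_sign_eq_prod_set:
  assumes "distinct vs" "\<And>i. i < length vs \<Longrightarrow> vs ! ((i + 1) mod length vs) = p (vs ! i)"
  shows "cycle_sign \<sigma> vs = (\<Prod>y\<in>set vs. \<sigma> (y, p y))"
proof -
  have "cycle_sign \<sigma> vs = (\<Prod>i<length vs. \<sigma> (vs ! i, p (vs ! i)))"
    unfolding cycle_sign_def using assms(2) by (intro prod.cong) auto
  also have "\<dots> = (\<Prod>y\<in>set vs. \<sigma> (y, p y))"
    using assms(1) by (simp add: prod.distinct_set_conv_list prod.list_conv_set_nth atLeast0LessThan)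
  finally show ?thesis .
qed

lemma dcycle_even_length:
  assumes "bipartite_digraph n D" "dcycle D vs"
  shows "even (length vs)"
proof -
  obtain X where X: "\<forall>(u, v) \<in> D. u \<in> X \<longleftrightarrow> v \<notin> X"
    using assms(1) unfolding bipartite_digraph_def by blast
  define k where "k = length vs"
  have arc: "(vs ! i, vs ! ((i + 1) mod k)) \<in> D" if "i < k" for i
    using assms(2) that unfolding dcycle_def k_def by blast
  have k: "k > 0" using assms(2) unfolding dcycle_def k_def by simp
  have alternate: "(vs ! i \<in> X) = (even i = (vs ! 0 \<in> X))" if "i < k" for i
    using that
  proof (induction i)
    case (Suc i)
    then have "vs ! i \<in> X \<longleftrightarrow> vs ! Suc i \<notin> X" using X arc[of i] by auto
    with Suc show ?case by auto
  qed simp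
  have "vs ! (k - 1) \<in> X \<longleftrightarrow> vs ! 0 \<notin> X"
    using X arc[of "k - 1"] k by auto
  then show ?thesis
    using alternate[of "k - 1"] k unfolding k_def[symmetric] by (cases "vs ! 0 \<in> X") auto
qed

lemma i_power_mod4: "\<i> ^ k = \<i> ^ (k mod 4)"
proof -
  have "\<i> ^ k = \<i> ^ (4 * (k div 4) + k mod 4)" by simp
  also have "\<dots> = (\<i> ^ 4) ^ (k div 4) * \<i> ^ (k mod 4)" by (simp only: power_add power_mult)
  finally show ?thesis by simp
qed

lemma Delta_cycle_sign:
  assumes "Delta1 n D \<sigma>1" "Delta2 n D \<sigma>2" "dcycle D vs"
  shows "(of_int (cycle_sign \<sigma>1 vs) :: complex) = \<i> ^ length vs * of_int (cycle_sign \<sigma>2 vs)"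
proof -
  have "bipartite_digraph n D" using assms(1) by (simp add: Delta1_def)
  then have "even (length vs)" using assms(3) by (rule dcycle_even_length)
  then have "length vs mod 4 = 0 \<or> length vs mod 4 = 2" by presburger
  moreover have "cycle_sign \<sigma>2 vs = -1"
    using assms(2,3) by (simp add: Delta2_def)
  moreover have "length vs mod 4 = 0 \<Longrightarrow> cycle_sign \<sigma>1 vs = -1"
    and "length vs mod 4 = 2 \<Longrightarrow> cycle_sign \<sigma>1 vs = 1"
    using assms(1,3) by (simp_all add: Delta1_def)
  ultimately show ?thesis
    unfolding i_power_mod4[of "length vs"] by (auto simp: power2_eq_square)
qed

definition char_entry :: "(nat \<times> nat) set \<Rightarrow> (nat \<times> nat \<Rightarrow> int) \<Rightarrow> complex \<Rightarrow> nat \<Rightarrow> nat \<Rightarrow> complex" where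
  "char_entry D \<sigma> w i j = (if i = j then w else 0) - (if (i, j) \<in> D then of_int (\<sigma> (i, j)) else 0)"

lemma phi_leibniz:
  "phi n D \<sigma> w = (\<Sum>p | p permutes {0..<n}. signof p * (\<Prod>i=0..<n. char_entry D \<sigma> w i (p i)))"
proof -
  have "w \<cdot>\<^sub>m 1\<^sub>m n - adj n D \<sigma> \<in> carrier_mat n n"
    by (intro minus_carrier_mat) (auto simp: adj_def)
  moreover have "(w \<cdot>\<^sub>m 1\<^sub>m n - adj n D \<sigma>) $$ (i, p i) = char_entry D \<sigma> w i (p i)"
    if "p permutes {0..<n}" "i \<in> {0..<n}" for p i
    using that permutes_in_image[OF that(1), of i] by (simp add: adj_def char_entry_def)
  ultimately show ?thesis
    unfolding phi_def by (simp add: det_def')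
qed

lemma char_entry_orbit_prod:
  assumes "Delta1 n D \<sigma>1" "Delta2 n D \<sigma>2" "permutation p"
  shows "(\<Prod>y\<in>orbit p x. char_entry D \<sigma>1 (\<i> * z) y (p y))
       = (\<Prod>y\<in>orbit p x. \<i> * char_entry D \<sigma>2 z y (p y))"
proof (cases "p x = x")
  case True
  have "(x, x) \<notin> D"
    using assms(1) by (simp add: Delta1_def bipartite_digraph_def digraph_def)
  moreover have "orbit p x = {x}" using True by (simp add: orbit_eq_singleton_iff)
  ultimately show ?thesis using True by (simp add: char_entry_def)
next
  case False
  obtain vs where vs: "distinct vs" "set vs = orbit p x"
    and succ: "\<And>i. i < length vs \<Longrightarrow> vs ! ((i + 1) mod length vs) = p (vs ! i)"
    using permutation_orbit_list[OF assms(3), of x] by blast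
  have moved: "p y \<noteq> y" if "y \<in> orbit p x" for y
  proof
    assume "p y = y"
    then have "orbit p y = {y}" by (simp add: orbit_eq_singleton_iff)
    moreover have "x \<in> orbit p y"
      using orbit_swap[OF permutation_self_in_orbit[OF assms(3)] that] .
    ultimately show False using False \<open>p y = y\<close> by simp
  qed
  have entry: "char_entry D \<sigma> w y (p y) = - (if (y, p y) \<in> D then of_int (\<sigma> (y, p y)) else 0)"
    if "y \<in> orbit p x" for \<sigma> w y
    using moved[OF that] by (simp add: char_entry_def)
  show ?thesis
  proof (cases "\<forall>y\<in>orbit p x. (y, p y) \<in> D")
    case True
    have "dcycle D vs"
      unfolding dcycle_def using vs succ True permutation_self_in_orbit[OF assms(3), of x]
      by (auto simp flip: vs(2))
    have cycle_prod: "(\<Prod>y\<in>orbit p x. c * char_entry D \<sigma> w y (p y))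
        = (- c) ^ length vs * of_int (cycle_sign \<sigma> vs)" for c \<sigma> w
    proof -
      have "(\<Prod>y\<in>orbit p x. c * char_entry D \<sigma> w y (p y))
          = (\<Prod>y\<in>set vs. - c * of_int (\<sigma> (y, p y)))"
        using True entry vs(2) by (intro prod.cong) auto
      also have "\<dots> = (\<Prod>y\<in>set vs. - c) * (\<Prod>y\<in>set vs. of_int (\<sigma> (y, p y)))"
        by (rule prod.distrib)
      also have "\<dots> = (- c) ^ length vs * of_int (cycle_sign \<sigma> vs)"
        by (simp add: distinct_card[OF vs(1)] cycle_sign_eq_prod_set[OF vs(1) succ])
      finally show ?thesis .
    qed
    have "(- 1) ^ length vs * \<i> ^ length vs = (- \<i> :: complex) ^ length vs"
      by (metis mult_minus1 power_mult_distrib)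
    then show ?thesis
      using cycle_prod[of 1] cycle_prod[of \<i>] Delta_cycle_sign[OF assms(1,2) \<open>dcycle D vs\<close>]
      by simp
  next
    case False
    then obtain y where y: "y \<in> orbit p x" "(y, p y) \<notin> D" by blast
    have "finite (orbit p x)" unfolding vs(2)[symmetric] by simp
    then have "(\<Prod>y\<in>orbit p x. c * char_entry D \<sigma> w y (p y)) = 0" for c \<sigma> w
      using y entry[OF y(1)] by (subst prod_zero_iff) auto
    from this[of 1] this[of \<i>] show ?thesis by simp
  qed
qed

lemma leibniz_term_rotation:
  assumes "Delta1 n D \<sigma>1" "Delta2 n D \<sigma>2" "p permutes {0..<n}"
  shows "(\<Prod>i=0..<n. char_entry D \<sigma>1 (\<i> * z) i (p i))
       = \<i> ^ n * (\<Prod>i=0..<n. char_entry D \<sigma>2 z i (p i))"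
proof -
  have "permutation p" using assms(3) permutation_permutes by blast
  have "(\<Prod>i=0..<n. char_entry D \<sigma>1 (\<i> * z) i (p i))
      = (\<Prod>i=0..<n. \<i> * char_entry D \<sigma>2 z i (p i))"
    by (rule prod_eq_by_orbits[OF assms(3)])
      (simp_all add: char_entry_orbit_prod[OF assms(1,2) \<open>permutation p\<close>])
  then show ?thesis by (simp add: prod.distrib)
qed

lemma phi_rotation:
  assumes "Delta1 n D \<sigma>1" "Delta2 n D \<sigma>2"
  shows "phi n D \<sigma>1 (\<i> * z) = \<i> ^ n * phi n D \<sigma>2 z"
  unfolding phi_leibniz sum_distrib_left
  by (rule sum.cong[OF refl]) (simp add: leibniz_term_rotation[OF assms])

lemma poly_char_poly_adj: "poly (char_poly (adj n D \<sigma>)) w = phi n D \<sigma> w"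
  unfolding char_poly_def phi_def
proof (rule poly_det_cong[of _ n])
  show "w \<cdot>\<^sub>m 1\<^sub>m n - adj n D \<sigma> \<in> carrier_mat n n"
    by (intro minus_carrier_mat) (auto simp: adj_def)
  show "char_poly_matrix (adj n D \<sigma>) \<in> carrier_mat n n"
    by (simp add: adj_def)
  fix i j assume "i < n" "j < n"
  then show "poly (char_poly_matrix (adj n D \<sigma>) $$ (i, j)) w = (w \<cdot>\<^sub>m 1\<^sub>m n - adj n D \<sigma>) $$ (i, j)"
    by (simp add: char_poly_matrix_def adj_def)
qed

lemma proots_linear_factors: "proots (\<Prod>a\<leftarrow>as. [:- a, 1:]) = mset (as :: 'a::idom list)"
proof (induction as)
  case (Cons a as)
  have "(\<Prod>a\<leftarrow>as. [:- a, 1:]) \<noteq> 0" by (auto simp: prod_list_zero_iff)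
  then show ?case using Cons.IH by (simp add: proots_mult del: mult_pCons_left)
qed simp

lemma poly_linear_factors_scaled:
  fixes c :: "'a::field"
  assumes "c \<noteq> 0"
  shows "c ^ length as * poly (\<Prod>a\<leftarrow>as. [:- a, 1:]) (w / c)
       = poly (\<Prod>a\<leftarrow>map (\<lambda>a. c * a) as. [:- a, 1:]) w"
  using assms by (induction as) (auto simp: field_simps)

lemma spec_rotation:
  assumes "Delta1 n D \<sigma>1" "Delta2 n D \<sigma>2"
  shows "spec n D \<sigma>1 = image_mset (\<lambda>z. \<i> * z) (spec n D \<sigma>2)"
proof -
  obtain as where as: "char_poly (adj n D \<sigma>2) = (\<Prod>a\<leftarrow>as. [:- a, 1:])" "length as = n"
    using char_poly_factorized[of "adj n D \<sigma>2" n] by (auto simp: adj_def)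
  have "poly (char_poly (adj n D \<sigma>1)) w = poly (\<Prod>a\<leftarrow>map (\<lambda>z. \<i> * z) as. [:- a, 1:]) w" for w
  proof -
    have "poly (char_poly (adj n D \<sigma>1)) w = phi n D \<sigma>1 (\<i> * (w / \<i>))"
      by (simp add: poly_char_poly_adj)
    also have "\<dots> = \<i> ^ n * phi n D \<sigma>2 (w / \<i>)"
      by (rule phi_rotation[OF assms])
    also have "\<dots> = \<i> ^ length as * poly (\<Prod>a\<leftarrow>as. [:- a, 1:]) (w / \<i>)"
      using as by (simp add: poly_char_poly_adj[symmetric])
    also have "\<dots> = poly (\<Prod>a\<leftarrow>map (\<lambda>z. \<i> * z) as. [:- a, 1:]) w"
      by (rule poly_linear_factors_scaled) simp
    finally show ?thesis .
  qed
  then have char_poly_1: "char_poly (adj n D \<sigma>1) = (\<Prod>a\<leftarrow>map (\<lambda>z. \<i> * z) as. [:- a, 1:])"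
    using poly_eq_poly_eq_iff by blast
  show ?thesis
    unfolding spec_def char_poly_1 as(1) proots_linear_factors by simp
qed

theorem mainTheorem13:
  fixes n :: nat and D :: "(nat \<times> nat) set" and \<sigma>1 \<sigma>2 :: "nat \<times> nat \<Rightarrow> int"
  assumes "bipartite_digraph n D"
    and "Delta1 n D \<sigma>1" and "Delta2 n D \<sigma>2"
  defines "\<epsilon> \<equiv> (if n mod 4 = 1 then \<i> else if n mod 4 = 3 then - \<i>
                  else if n mod 4 = 0 then 1 else -1)"
  shows "(\<forall>z. phi n D \<sigma>1 (\<i> * z) = \<epsilon> * phi n D \<sigma>2 z)
    \<and> spec n D \<sigma>1 = image_mset (\<lambda>z. \<i> * z) (spec n D \<sigma>2)
    \<and> energy n D \<sigma>1 = sum_mset (image_mset (\<lambda>z. \<bar>Im z\<bar>) (spec n D \<sigma>2))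
    \<and> energy n D \<sigma>2 = sum_mset (image_mset (\<lambda>z. \<bar>Im z\<bar>) (spec n D \<sigma>1))"
proof -
  \<comment> \<open>The bipartiteness hypothesis is already part of \<open>Delta1\<close>.\<close>
  have "n mod 4 = 0 \<or> n mod 4 = 1 \<or> n mod 4 = 2 \<or> n mod 4 = 3" by arith
  then have "\<epsilon> = \<i> ^ n"
    unfolding \<epsilon>_def i_power_mod4[of n] by (auto simp: power2_eq_square power3_eq_cube)
  moreover note spec = spec_rotation[OF assms(2,3)]
  ultimately show ?thesis
    using phi_rotation[OF assms(2,3)]
    unfolding energy_def spec image_mset.compositionality by (simp add: comp_def)
qed

end
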